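(* Let $w$ be a word of length $n\ge 2$ such that each letter appears at most $k$ times in $w$. Then $f(w)\le \max\{4k,n\}+2$.
   Context: A word of length $n$ is a sequence $w=w_1w_2\cdots w_n$ of letters (symbols). Let $[n]=\{1,\dots,n\}$. An $n$-grid is a function $G:[n]^2\to\Sigma$, where $\Sigma$ is an arbitrary set of letters. The $i$th row of $G$ contains $w$ if $G(i,j)=w_j$ for all $1\le j\le n$, or $G(i,j)=w_{n-j+1}$ for all $1\le j\le n$. The $j$th column contains $w$ if $G(i,j)=w_i$ for all $i$, or $G(i,j)=w_{n-i+1}$ for all $i$. The main diagonal contains $w$ if $G(i,i)=w_i$ for all $i$ or $G(i,i)=w_{n-i+1}$ for all $i$; the anti-diagonal contains $w$ if $G(i,n-i+1)=w_i$ for all $i$ or $G(i,n-i+1)=w_{n-i+1}$ for all $i$. Let $f(w,G)$ be the number of the $2n+2$ lines ($n$ rows, $n$ columns, $2$ diagonals) of $G$ that contain $w$, and $f(w)=\max_G f(w,G)$ over all $n$-grids $G$. *)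

theory Defs
  imports Main
begin

text \<open>A word of length n is represented by w :: nat => 'a, with letters w 1, ..., w n.
An n-grid is G :: nat => nat => 'a, only the values on {1..n} x {1..n} matter.\<close>

definition seq_contains :: "nat \<Rightarrow> (nat \<Rightarrow> 'a) \<Rightarrow> (nat \<Rightarrow> 'a) \<Rightarrow> bool" where
  "seq_contains n L w \<longleftrightarrow>
     (\<forall>i\<in>{1..n}. L i = w i) \<or> (\<forall>i\<in>{1..n}. L i = w (n - i + 1))"

definition row_contains :: "nat \<Rightarrow> (nat \<Rightarrow> nat \<Rightarrow> 'a) \<Rightarrow> nat \<Rightarrow> (nat \<Rightarrow> 'a) \<Rightarrow> bool" where
  "row_contains n G i w \<longleftrightarrow> seq_contains n (\<lambda>j. G i j) w"

definition col_contains :: "nat \<Rightarrow> (nat \<Rightarrow> nat \<Rightarrow> 'a) \<Rightarrow> nat \<Rightarrow> (nat \<Rightarrow> 'a) \<Rightarrow> bool" where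
  "col_contains n G j w \<longleftrightarrow> seq_contains n (\<lambda>i. G i j) w"

definition diag_contains :: "nat \<Rightarrow> (nat \<Rightarrow> nat \<Rightarrow> 'a) \<Rightarrow> (nat \<Rightarrow> 'a) \<Rightarrow> bool" where
  "diag_contains n G w \<longleftrightarrow> seq_contains n (\<lambda>i. G i i) w"

definition antidiag_contains :: "nat \<Rightarrow> (nat \<Rightarrow> nat \<Rightarrow> 'a) \<Rightarrow> (nat \<Rightarrow> 'a) \<Rightarrow> bool" where
  "antidiag_contains n G w \<longleftrightarrow> seq_contains n (\<lambda>i. G i (n - i + 1)) w"

definition f_grid :: "nat \<Rightarrow> (nat \<Rightarrow> 'a) \<Rightarrow> (nat \<Rightarrow> nat \<Rightarrow> 'a) \<Rightarrow> nat" where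
  "f_grid n w G =
     card {i\<in>{1..n}. row_contains n G i w}
   + card {j\<in>{1..n}. col_contains n G j w}
   + (if diag_contains n G w then 1 else 0)
   + (if antidiag_contains n G w then 1 else 0)"

text \<open>f(w) = max over all n-grids (values bounded by 2n+2, so the max exists).\<close>
definition f_max :: "nat \<Rightarrow> (nat \<Rightarrow> 'a) \<Rightarrow> nat" where
  "f_max n w = Max (range (f_grid n w))"

end

theory Submission
  imports Defs
begin

text \<open>A line containing w is w or its reversal, so it contains every letter at most k times.
If some row i contains w, every column containing w meets row i in the letter w i or
w (n - i + 1), so there are at most 2k such columns; symmetrically, a column containing w
leaves room for at most 2k rows. Hence rows and columns together contribute at most 4k
if both kinds occur, and at most n otherwise; the two diagonals add at most 2.\<close>

lemma seq_contains_at: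
  assumes "seq_contains n L w" and "i \<in> {1..n}"
  shows "L i = w i \<or> L i = w (n - i + 1)"
  using assms unfolding seq_contains_def by blast

lemma card_letter_reversed:
  fixes w :: "nat \<Rightarrow> 'a" and n :: nat
  shows "card {i\<in>{1..n}. w (n - i + 1) = a} = card {i\<in>{1..n}. w i = a}"
proof -
  let ?r = "\<lambda>i::nat. n - i + 1"
  have "bij_betw ?r {i\<in>{1..n}. w (?r i) = a} {i\<in>{1..n}. w i = a}"
    by (rule bij_betw_byWitness[where f' = ?r]) auto
  then show ?thesis by (rule bij_betw_same_card)
qed

lemma seq_contains_card_letter:
  assumes "seq_contains n L w"
  shows "card {i\<in>{1..n}. L i = a} = card {i\<in>{1..n}. w i = a}"
proof -
  from assms consider "\<forall>i\<in>{1..n}. L i = w i" | "\<forall>i\<in>{1..n}. L i = w (n - i + 1)"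
    unfolding seq_contains_def by blast
  then show ?thesis
  proof cases
    case 1
    then have "{i\<in>{1..n}. L i = a} = {i\<in>{1..n}. w i = a}" by auto
    then show ?thesis by simp
  next
    case 2
    then have "{i\<in>{1..n}. L i = a} = {i\<in>{1..n}. w (n - i + 1) = a}" by auto
    also have "card \<dots> = card {i\<in>{1..n}. w i = a}" by (rule card_letter_reversed)
    finally show ?thesis .
  qed
qed

lemma seq_contains_card_two_letters:
  assumes "seq_contains n L w"
    and "\<And>a. card {i\<in>{1..n}. w i = a} \<le> k"
  shows "card {i\<in>{1..n}. L i = a \<or> L i = b} \<le> 2 * k"
proof -
  have "{i\<in>{1..n}. L i = a \<or> L i = b} = {i\<in>{1..n}. L i = a} \<union> {i\<in>{1..n}. L i = b}"
    by auto
  then have "card {i\<in>{1..n}. L i = a \<or> L i = b}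
      \<le> card {i\<in>{1..n}. L i = a} + card {i\<in>{1..n}. L i = b}"
    by (simp add: card_Un_le)
  also have "\<dots> \<le> 2 * k"
    using assms(2)[of a] assms(2)[of b] seq_contains_card_letter[OF assms(1), of a]
      seq_contains_card_letter[OF assms(1), of b]
    by linarith
  finally show ?thesis .
qed

lemma card_cols_containing_le_if_row_contains:
  assumes "\<And>a. card {i\<in>{1..n}. w i = a} \<le> k"
    and "i0 \<in> {1..n}" and "row_contains n G i0 w"
  shows "card {j\<in>{1..n}. col_contains n G j w} \<le> 2 * k"
proof -
  have row: "seq_contains n (\<lambda>j. G i0 j) w"
    using assms(3) unfolding row_contains_def .
  have "{j\<in>{1..n}. col_contains n G j w}
      \<subseteq> {j\<in>{1..n}. G i0 j = w i0 \<or> G i0 j = w (n - i0 + 1)}"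
    using seq_contains_at[of n _ w i0] assms(2) unfolding col_contains_def by auto
  then have "card {j\<in>{1..n}. col_contains n G j w}
      \<le> card {j\<in>{1..n}. G i0 j = w i0 \<or> G i0 j = w (n - i0 + 1)}"
    by (intro card_mono) auto
  also have "\<dots> \<le> 2 * k"
    by (rule seq_contains_card_two_letters[OF row assms(1)])
  finally show ?thesis .
qed

lemma col_contains_iff_row_contains_transpose:
  "col_contains n G j w \<longleftrightarrow> row_contains n (\<lambda>i j. G j i) j w"
  unfolding row_contains_def col_contains_def ..

lemma card_rows_containing_le_if_col_contains:
  assumes "\<And>a. card {i\<in>{1..n}. w i = a} \<le> k"
    and "j0 \<in> {1..n}" and "col_contains n G j0 w"
  shows "card {i\<in>{1..n}. row_contains n G i w} \<le> 2 * k"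
  using card_cols_containing_le_if_row_contains[of n w k j0 "\<lambda>i j. G j i"] assms
  by (simp add: col_contains_iff_row_contains_transpose)

lemma card_filter_atLeastAtMost_le: "card {i\<in>{1..n}. P i} \<le> (n::nat)"
proof -
  have "card {i\<in>{1..n}. P i} \<le> card {1..n}" by (rule card_mono) auto
  then show ?thesis by simp
qed

lemma f_grid_le:
  fixes w :: "nat \<Rightarrow> 'a"
  assumes "\<And>a. card {i\<in>{1..n}. w i = a} \<le> k"
  shows "f_grid n w G \<le> max (4 * k) n + 2"
proof -
  define R where "R = {i\<in>{1..n}. row_contains n G i w}"
  define C where "C = {j\<in>{1..n}. col_contains n G j w}"
  have "card R + card C \<le> max (4 * k) n"
  proof (cases "R = {} \<or> C = {}")
    case True
    moreover have "card R \<le> n" "card C \<le> n"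
      unfolding R_def C_def by (rule card_filter_atLeastAtMost_le)+
    ultimately show ?thesis by auto
  next
    case False
    then obtain i0 j0 where "i0 \<in> R" "j0 \<in> C" by blast
    then have "card C \<le> 2 * k" "card R \<le> 2 * k"
      using card_cols_containing_le_if_row_contains[OF assms, of i0 G]
        card_rows_containing_le_if_col_contains[OF assms, of j0 G]
      unfolding R_def C_def by auto
    then show ?thesis by linarith
  qed
  then show ?thesis
    unfolding f_grid_def R_def[symmetric] C_def[symmetric] by simp
qed

theorem lemma12:
  fixes w :: "nat \<Rightarrow> 'a" and n k :: nat
  assumes "n \<ge> 2"
    and "\<And>a. card {i\<in>{1..n}. w i = a} \<le> k"
  shows "f_max n w \<le> max (4 * k) n + 2"
proof -
  \<comment> \<open>The bound holds for every n.\<close>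
  have bound: "f_grid n w G \<le> max (4 * k) n + 2" for G
    using f_grid_le[OF assms(2)] .
  then have "finite (range (f_grid n w))"
    by (auto simp: finite_nat_set_iff_bounded_le)
  then show ?thesis
    unfolding f_max_def using bound by (subst Max_le_iff) auto
qed

end
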